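(* For $I\subseteq\{0,\dots,n\}$ and $u,v\in U^I$, $$\mathrm{ord}_p\,\theta_{0,qu-v}(\hat\lambda)\ge\frac{pu_{n+1}-v_{n+1}}{p-1}+(a-1)(\mu_I+1).$$
   Context: $p$ prime, $a\ge1$, $q=p^a$, $n\ge1$, $d\ge2$; ${\bf a}_1,\dots,{\bf a}_N\in\mathbb{N}^{n+1}$ with coordinate sums $d$, ${\bf a}_j^+=({\bf a}_j,1)\in\mathbb{N}^{n+2}$. $\mu_I$ is defined by $\lceil|I|/d\rceil=\mu_I+1$; $U^I$ is the set of $u\in\mathbb{N}^{n+2}$ with $\sum_{i=0}^nu_i=du_{n+1}$ and $u_i>0$ for $i\in I$. $\mathrm{ord}_p$ is normalized by $\mathrm{ord}_p\,p=1$. $\gamma_0$ is a zero of $\sum_{i\ge0}t^{p^i}/p^i$ with $\mathrm{ord}_p\gamma_0=1/(p-1)$; $\theta(t)=\mathrm{AH}(\gamma_0t)$ with $\mathrm{AH}(t)=\exp(\sum_{i\ge0}t^{p^i}/p^i)$. For $\lambda\in\mathbb{F}_q^N$ with Teichmüller lifting $\hat\lambda$, set $\theta(\hat\lambda,x)=\prod_{j=1}^N\theta(\hat\lambda_jx^{{\bf a}_j^+})$ and $\theta_0(\hat\lambda,x)=\prod_{i=0}^{a-1}\theta(\hat\lambda^{p^i},x^{p^i})$ (powers componentwise), and write $\theta_0(\hat\lambda,x)=\sum_w\theta_{0,w}(\hat\lambda)x^w$ ($\theta_{0,w}=0$ if $x^w$ does not occur). *)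

theory Defs
  imports Complex_Main "HOL-Library.Extended_Real" "HOL-Computational_Algebra.Formal_Power_Series"
begin

definition is_ord_p :: "nat \<Rightarrow> ('k::field_char_0 \<Rightarrow> ereal) \<Rightarrow> bool" where
  "is_ord_p p ord \<longleftrightarrow>
     (\<forall>x. ord x = \<infinity> \<longleftrightarrow> x = 0) \<and>
     (\<forall>x. ord x \<noteq> - \<infinity>) \<and>
     (\<forall>x y. ord (x * y) = ord x + ord y) \<and>
     (\<forall>x y. ord (x + y) \<ge> min (ord x) (ord y)) \<and>
     ord (of_nat p) = 1"

definition AH_log :: "nat \<Rightarrow> rat fps" where
  "AH_log p = Abs_fps (\<lambda>k. if (\<exists>i. k = p ^ i) then 1 / of_nat k else 0)"

definition AH :: "nat \<Rightarrow> rat fps" where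
  "AH p = fps_exp 1 oo AH_log p"

text \<open>gamma0 is a zero of sum_i t^(p^i)/p^i (convergence w.r.t. ord) with ord gamma0 = 1/(p-1).\<close>
definition is_gamma0 :: "nat \<Rightarrow> ('k::field_char_0 \<Rightarrow> ereal) \<Rightarrow> 'k \<Rightarrow> bool" where
  "is_gamma0 p ord g \<longleftrightarrow>
     ord g = ereal (1 / (real p - 1)) \<and>
     (\<forall>M::real. \<exists>m0. \<forall>m\<ge>m0.
        ord (\<Sum>i<m. g ^ (p ^ i) / of_nat (p ^ i)) \<ge> ereal M)"

text \<open>a_j^+ = (a_j, 1), coordinates 0..n+1; exponent vectors A j (j < N), coordinates 0..n.\<close>
definition Aplus :: "nat \<Rightarrow> (nat \<Rightarrow> nat \<Rightarrow> nat) \<Rightarrow> nat \<Rightarrow> nat \<Rightarrow> nat" where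
  "Aplus n A j l = (if l = n + 1 then 1 else A j l)"

text \<open>Coefficient theta_{0,w}(lambda-hat) of x^w in
  theta_0(lambda-hat,x) = prod_{i<a} prod_{j<N} theta(lambda-hat_j^(p^i) x^(p^i a_j^+)),
  theta(t) = AH(gamma0 t) = sum_k AH_k gamma0^k t^k.  A monomial is given by k(i,j)
  (the power of the (i,j)-th factor); w ranges over Z^(n+2) (coefficient 0 if x^w does not occur).\<close>
definition theta0_coeff ::
  "nat \<Rightarrow> nat \<Rightarrow> nat \<Rightarrow> nat \<Rightarrow> (nat \<Rightarrow> nat \<Rightarrow> nat) \<Rightarrow> 'k::field_char_0 \<Rightarrow> (nat \<Rightarrow> 'k)
     \<Rightarrow> (nat \<Rightarrow> int) \<Rightarrow> 'k" where
  "theta0_coeff p a n N A g lam w =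
     (\<Sum>k\<in>{k :: nat \<times> nat \<Rightarrow> nat.
            (\<forall>i j. k (i, j) \<noteq> 0 \<longrightarrow> i < a \<and> j < N) \<and>
            (\<forall>l\<le>n+1. (\<Sum>i<a. \<Sum>j<N. int (k (i, j) * p ^ i * Aplus n A j l)) = w l)}.
        \<Prod>i<a. \<Prod>j<N. of_rat (fps_nth (AH p) (k (i, j))) * g ^ k (i, j)
                         * lam j ^ (k (i, j) * p ^ i))"

definition mu :: "nat \<Rightarrow> nat set \<Rightarrow> int" where
  "mu d I = \<lceil>real (card I) / real d\<rceil> - 1"

definition U :: "nat \<Rightarrow> nat \<Rightarrow> nat set \<Rightarrow> (nat \<Rightarrow> nat) set" where
  "U n d I = {u. (\<forall>l>n+1. u l = 0) \<and> (\<Sum>i\<le>n. u i) = d * u (n+1) \<and> (\<forall>i\<in>I. u i > 0)}"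

end

(*
  Dwork's lemma applied to
  AH(X)^p = AH(X^p) exp(pX) shows that the Artin-Hasse coefficients are p-integral, and the lambda_j
  are zero or roots of unity, so every term has valuation at least (sum k(i,j)) / (p - 1).
  The exponent constraints present p^a u - v coordinatewise as a base-p expansion with digits
  built from the k(i,j). Truncating the first m digits leaves, in the top coordinate, a defect
  D_m = p^(a-m) u_(n+1) - tail_m; summing the analogous defects of the other coordinates gives
  d D_m, and every l in I contributes at least 1 because v_l > 0, so D_m >= mu_I + 1. Telescoping,
  sum k(i,j) = p u_(n+1) - v_(n+1) + (p - 1)(D_1 + ... + D_(a-1)).
*)

theory Submission
  imports Defs "HOL-Number_Theory.Residues"
begin

unbundle fps_syntax

section \<open>Power series preliminaries\<close>

lemma power_add_first_order:
  fixes x y :: "'a::comm_ring_1"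
  shows "\<exists>z. (x + y) ^ k = x ^ k + of_nat k * y * x ^ (k - 1) + y\<^sup>2 * z"
proof (induction k)
  case 0
  show ?case by (intro exI[of _ 0]) simp
next
  case (Suc k)
  then obtain z where z: "(x + y) ^ k = x ^ k + of_nat k * y * x ^ (k - 1) + y\<^sup>2 * z"
    by blast
  show ?case
  proof (cases k)
    case 0
    then show ?thesis by (intro exI[of _ 0]) simp
  next
    case (Suc j)
    have "(x + y) ^ Suc k = (x + y) * (x ^ k + of_nat k * y * x ^ (k - 1) + y\<^sup>2 * z)"
      using z by simp
    also have "\<dots> = x ^ Suc k + of_nat (Suc k) * y * x ^ (Suc k - 1)
                     + y\<^sup>2 * (z * x + of_nat k * x ^ j + y * z)"
      unfolding Suc by (simp add: algebra_simps power2_eq_square)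
    finally show ?thesis by blast
  qed
qed

lemma fps_power_nth_eq_cutoff:
  fixes f :: "'a::comm_ring_1 fps"
  assumes "n > 0" "f $ 0 = 1"
  shows "(f ^ k) $ n = (fps_cutoff n f ^ k) $ n + of_nat k * f $ n"
proof -
  define F where "F = fps_cutoff n f"
  define R where "R = fps_X ^ n * fps_shift n f"
  have "f = R + F"
    unfolding F_def R_def by (rule fps_shift_cutoff'[symmetric])
  then have f_eq: "f = F + R" by (simp only: add.commute)
  obtain z where z: "(F + R) ^ k = F ^ k + of_nat k * R * F ^ (k - 1) + R\<^sup>2 * z"
    using power_add_first_order by blast
  have "of_nat k * R * F ^ (k - 1) = fps_X ^ n * (of_nat k * fps_shift n f * F ^ (k - 1))"
    unfolding R_def by (simp add: algebra_simps)
  then have "(of_nat k * R * F ^ (k - 1)) $ n = (of_nat k * fps_shift n f * F ^ (k - 1)) $ 0"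
    by (simp only: fps_X_power_mult_nth) simp
  also have "\<dots> = of_nat k * f $ n"
    using assms by (simp add: F_def fps_power_zeroth)
  finally have linear: "(of_nat k * R * F ^ (k - 1)) $ n = of_nat k * f $ n" .
  have "R\<^sup>2 * z = fps_X ^ (n + n) * ((fps_shift n f)\<^sup>2 * z)"
    unfolding R_def by (simp add: algebra_simps power2_eq_square flip: power_add)
  then have quadratic: "(R\<^sup>2 * z) $ n = 0"
    using assms(1) by (simp add: fps_X_power_mult_nth)
  show ?thesis
    unfolding F_def[symmetric] by (subst f_eq, subst z) (simp only: fps_add_nth linear quadratic add_0_right)
qed

lemma fps_compose_X_power_nth:
  fixes f :: "'a::comm_ring_1 fps"
  assumes "q > 0"
  shows "(f oo fps_X ^ q) $ m = (if q dvd m then f $ (m div q) else 0)"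
proof -
  have "(f oo fps_X ^ q) $ m = (\<Sum>i=0..m. if i = m div q \<and> q dvd m then f $ i else 0)"
    unfolding fps_compose_nth
  proof (rule sum.cong[OF refl])
    fix i
    have "(fps_X ^ q) ^ i = (fps_X ^ (q * i) :: 'a fps)" by (simp add: power_mult)
    moreover have "(m = q * i) \<longleftrightarrow> (i = m div q \<and> q dvd m)" using assms by auto
    ultimately show "f $ i * ((fps_X ^ q) ^ i) $ m = (if i = m div q \<and> q dvd m then f $ i else 0)"
      by auto
  qed
  also have "\<dots> = (if q dvd m then f $ (m div q) else 0)"
    by (auto simp: sum.delta' div_le_dividend)
  finally show ?thesis .
qed

lemma fps_power_nth_eq_convolution:
  fixes f E :: "'a::comm_ring_1 fps"
  assumes f0: "f $ 0 = 1" and f_power: "f ^ p = (f oo fps_X ^ p) * E" and E0: "E $ 0 = 1"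
    and "p > 1" and "n > 0"
  shows "of_nat p * f $ n = (\<Sum>i<n. (f oo fps_X ^ p) $ i * E $ (n - i))
           - ((fps_cutoff n f ^ p) $ n - (fps_cutoff n f oo fps_X ^ p) $ n)"
proof -
  define F where "F = fps_cutoff n f"
  have compose_n: "(f oo fps_X ^ p) $ n = (F oo fps_X ^ p) $ n"
    using assms(4,5) by (simp add: fps_compose_X_power_nth F_def)
  have "(f ^ p) $ n = ((f oo fps_X ^ p) * E) $ n"
    by (simp only: f_power)
  also have "\<dots> = (\<Sum>i<Suc n. (f oo fps_X ^ p) $ i * E $ (n - i))"
    by (simp only: fps_mult_nth atLeast0AtMost lessThan_Suc_atMost)
  also have "\<dots> = (\<Sum>i<n. (f oo fps_X ^ p) $ i * E $ (n - i)) + (F oo fps_X ^ p) $ n"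
    using E0 compose_n by simp
  finally have "(f ^ p) $ n = (\<Sum>i<n. (f oo fps_X ^ p) $ i * E $ (n - i)) + (F oo fps_X ^ p) $ n" .
  moreover have "(f ^ p) $ n = (F ^ p) $ n + of_nat p * f $ n"
    unfolding F_def using assms(5) f0 by (intro fps_power_nth_eq_cutoff) auto
  ultimately show ?thesis unfolding F_def by (simp add: algebra_simps)
qed

lemma fps_linear_ode_unique:
  fixes y z h :: "'a::field_char_0 fps"
  assumes "fps_deriv y = h * y" "fps_deriv z = h * z" "y $ 0 = z $ 0"
  shows "y = z"
proof (rule fps_ext)
  fix n
  show "y $ n = z $ n"
  proof (induction n rule: less_induct)
    case (less n)
    show ?case
    proof (cases n)
      case 0
      then show ?thesis using assms(3) by simp
    next
      case (Suc k)
      have "(h * y) $ k = (h * z) $ k"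
        unfolding fps_mult_nth using less Suc by (intro sum.cong) auto
      then have "fps_deriv y $ k = fps_deriv z $ k" using assms(1,2) by simp
      then show ?thesis using Suc by (simp del: of_nat_Suc)
    qed
  qed
qed

section \<open>p-integral rationals and Dwork's lemma\<close>

definition p_integral :: "nat \<Rightarrow> rat \<Rightarrow> bool" where
  "p_integral p x \<longleftrightarrow> (\<exists>a b::int. \<not> int p dvd b \<and> x = of_int a / of_int b)"

definition p_divisible :: "nat \<Rightarrow> rat \<Rightarrow> bool" where
  "p_divisible p x \<longleftrightarrow> p_integral p (x / of_nat p)"

definition p_integral_fps :: "nat \<Rightarrow> rat fps \<Rightarrow> bool" where
  "p_integral_fps p f \<longleftrightarrow> (\<forall>m. p_integral p (f $ m))"

context
  fixes p :: nat
  assumes prime_p: "prime p"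
begin

lemma p_integral_of_int [simp]: "p_integral p (of_int z)"
  unfolding p_integral_def using prime_p
  by (intro exI[of _ z] exI[of _ 1]) (auto simp: prime_gt_1_nat)

lemma p_integral_of_nat [simp]: "p_integral p (of_nat m)"
  using p_integral_of_int[of "int m"] by simp

lemma p_integral_0 [simp]: "p_integral p 0"
  and p_integral_1 [simp]: "p_integral p 1"
  using p_integral_of_int[of 0] p_integral_of_int[of 1] by simp_all

lemma p_integral_add [intro]:
  assumes "p_integral p x" "p_integral p y"
  shows "p_integral p (x + y)"
proof -
  obtain a b c e where ab: "\<not> int p dvd b" "x = of_int a / of_int b"
    and ce: "\<not> int p dvd e" "y = of_int c / of_int e"
    using assms unfolding p_integral_def by blast
  have "b \<noteq> 0" "e \<noteq> 0" using ab ce by auto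
  have "\<not> int p dvd (b * e)"
    using ab ce prime_p by (simp add: prime_dvd_mult_iff)
  moreover have "x + y = of_int (a * e + c * b) / of_int (b * e)"
    using \<open>b \<noteq> 0\<close> \<open>e \<noteq> 0\<close> unfolding ab(2) ce(2) by (simp add: field_simps)
  ultimately show ?thesis unfolding p_integral_def by blast
qed

lemma p_integral_mult [intro]:
  assumes "p_integral p x" "p_integral p y"
  shows "p_integral p (x * y)"
proof -
  obtain a b c e where ab: "\<not> int p dvd b" "x = of_int a / of_int b"
    and ce: "\<not> int p dvd e" "y = of_int c / of_int e"
    using assms unfolding p_integral_def by blast
  have "\<not> int p dvd (b * e)"
    using ab ce prime_p by (simp add: prime_dvd_mult_iff)
  moreover have "x * y = of_int (a * c) / of_int (b * e)"
    unfolding ab(2) ce(2) by simp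
  ultimately show ?thesis unfolding p_integral_def by blast
qed

lemma p_integral_uminus [intro]: "p_integral p x \<Longrightarrow> p_integral p (- x)"
  using p_integral_mult[OF p_integral_of_int[of "-1"]] by simp

lemma p_integral_diff [intro]: "p_integral p x \<Longrightarrow> p_integral p y \<Longrightarrow> p_integral p (x - y)"
  using p_integral_add[of x "- y"] by auto

lemma p_integral_sum [intro]: "(\<And>i. i \<in> S \<Longrightarrow> p_integral p (f i)) \<Longrightarrow> p_integral p (sum f S)"
  by (induction S rule: infinite_finite_induct) auto

lemma p_divisible_p_mult_iff: "p_divisible p (of_nat p * x) \<longleftrightarrow> p_integral p x"
  unfolding p_divisible_def using prime_p by (simp add: prime_gt_0_nat)

lemma p_divisible_0 [simp]: "p_divisible p 0"
  by (simp add: p_divisible_def)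

lemma p_divisible_add [intro]: "p_divisible p x \<Longrightarrow> p_divisible p y \<Longrightarrow> p_divisible p (x + y)"
  unfolding p_divisible_def by (metis add_divide_distrib p_integral_add)

lemma p_divisible_diff [intro]: "p_divisible p x \<Longrightarrow> p_divisible p y \<Longrightarrow> p_divisible p (x - y)"
  unfolding p_divisible_def by (metis diff_divide_distrib p_integral_diff)

lemma p_divisible_sum [intro]:
  "(\<And>i. i \<in> S \<Longrightarrow> p_divisible p (f i)) \<Longrightarrow> p_divisible p (sum f S)"
  by (induction S rule: infinite_finite_induct) auto

lemma p_divisible_mult [intro]: "p_divisible p x \<Longrightarrow> p_integral p y \<Longrightarrow> p_divisible p (x * y)"
  unfolding p_divisible_def by (metis p_integral_mult times_divide_eq_left)

lemma p_divisible_of_nat_mult: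
  assumes "p dvd m" "p_integral p y"
  shows "p_divisible p (of_nat m * y)"
proof -
  obtain r where "m = p * r" using assms(1) by blast
  then have "of_nat m * y = of_nat p * (of_nat r * y)" by simp
  then show ?thesis using assms(2) p_divisible_p_mult_iff by auto
qed

lemma int_power_prime_cong: "[z ^ p = z] (mod int p)" for z :: int
proof -
  define r where "r = nat (z mod int p)"
  have p_pos: "p > 0" using prime_p prime_gt_0_nat by blast
  have z_r: "[z = int r] (mod int p)" unfolding r_def using p_pos by (simp add: cong_def)
  have "r < p" unfolding r_def using p_pos by (simp add: nat_less_iff)
  have "[r ^ p = r] (mod p)"
  proof (cases "p dvd r")
    case True
    then have "r = 0" using \<open>r < p\<close> by (metis dvd_imp_le gr0I not_less)
    then show ?thesis using p_pos by (simp add: zero_power)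
  next
    case False
    then have "[r * r ^ (p - 1) = r * 1] (mod p)"
      using fermat_theorem[OF prime_p] by (intro cong_mult cong_refl) blast
    then show ?thesis using p_pos by (metis Suc_diff_1 power_Suc mult_1_right)
  qed
  then have "[int r ^ p = int r] (mod int p)" by (metis cong_int_iff of_nat_power)
  then show ?thesis using cong_pow[OF z_r, of p] z_r by (metis cong_sym cong_trans)
qed

lemma p_divisible_power_p_diff: "p_integral p x \<Longrightarrow> p_divisible p (x ^ p - x)"
proof -
  assume "p_integral p x"
  then obtain a b where ab: "\<not> int p dvd b" "x = of_int a / of_int b"
    unfolding p_integral_def by blast
  have "[a ^ p * b - a * b ^ p = a * b - a * b] (mod int p)"
    by (intro cong_diff cong_mult int_power_prime_cong cong_refl)
  then obtain c where c: "a ^ p * b - a * b ^ p = int p * c"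
    by (auto simp: cong_0_iff elim!: dvdE)
  have "b \<noteq> 0" using ab by auto
  then have "x ^ p - x = of_int (a ^ p * b - a * b ^ p) / of_int (b ^ (p + 1))"
    unfolding ab(2) by (simp add: field_simps)
  also have "\<dots> = of_nat p * (of_int c / of_int (b ^ (p + 1)))" by (simp add: c)
  finally have "x ^ p - x = of_nat p * (of_int c / of_int (b ^ (p + 1)))" .
  moreover have "p_integral p (of_int c / of_int (b ^ (p + 1)))"
    using ab prime_p unfolding p_integral_def by (metis prime_dvd_power prime_nat_int_transfer)
  ultimately show ?thesis by (simp only: p_divisible_p_mult_iff)
qed

lemma fact_eq_prime_power_mult_fact_div:
  "\<exists>c. fact k = p ^ (k div p) * fact (k div p) * c \<and> \<not> p dvd c"
proof (induction k)
  case 0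
  show ?case using prime_p by (intro exI[of _ 1]) auto
next
  case (Suc k)
  then obtain c where c: "fact k = p ^ (k div p) * fact (k div p) * c" "\<not> p dvd c"
    by blast
  show ?case
  proof (cases "p dvd Suc k")
    case True
    then have div: "Suc k div p = Suc (k div p)" by (simp add: div_Suc dvd_eq_mod_eq_0)
    then have Suc_k: "Suc k = p * Suc (k div p)"
      using True by (metis dvd_mult_div_cancel)
    have "fact (Suc k) = Suc k * fact k" by simp
    also have "\<dots> = p ^ (Suc k div p) * fact (Suc k div p) * c"
      unfolding c(1) div by (subst Suc_k) (simp add: algebra_simps)
    finally show ?thesis using c(2) by blast
  next
    case False
    then have "Suc k div p = k div p" by (simp add: div_Suc dvd_eq_mod_eq_0)
    then have "fact (Suc k) = p ^ (Suc k div p) * fact (Suc k div p) * (Suc k * c)"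
      by (simp add: c(1) algebra_simps)
    moreover have "\<not> p dvd Suc k * c" using False c(2) prime_p by (metis prime_dvd_mult_iff)
    ultimately show ?thesis by blast
  qed
qed

lemma multiplicity_fact: "multiplicity p (fact k :: nat) = k div p + multiplicity p (fact (k div p) :: nat)"
proof -
  obtain c where c: "fact k = p ^ (k div p) * fact (k div p) * c" "\<not> p dvd c"
    using fact_eq_prime_power_mult_fact_div by blast
  have "c \<noteq> 0" using c(2) by (metis dvd_0_right)
  then show ?thesis using prime_p c
    by (simp add: prime_elem_multiplicity_mult_distrib not_dvd_imp_multiplicity_0)
qed

lemma multiplicity_fact_less: "k > 0 \<Longrightarrow> multiplicity p (fact k :: nat) < k"
proof (induction k rule: less_induct)
  case (less k)
  show ?case
  proof (cases "k div p = 0")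
    case True
    then show ?thesis using less.prems multiplicity_fact[of k] by simp
  next
    case False
    have "k div p < k" using less.prems prime_gt_1_nat[OF prime_p] by simp
    then have "multiplicity p (fact (k div p) :: nat) < k div p" using False less.IH by blast
    moreover have "2 * (k div p) \<le> p * (k div p)" using prime_ge_2_nat[OF prime_p] by simp
    moreover have "p * (k div p) \<le> k" by (rule times_div_less_eq_dividend)
    ultimately show ?thesis using multiplicity_fact[of k] by linarith
  qed
qed

lemma p_divisible_p_power_div_fact:
  assumes "k > 0"
  shows "p_divisible p (of_nat p ^ k / fact k)"
proof -
  define e where "e = multiplicity p (fact k :: nat)"
  have "fact k \<noteq> (0::nat)" "\<not> is_unit p" using prime_p by auto
  then obtain c where c: "fact k = p ^ e * c" "\<not> p dvd c"
    unfolding e_def by (rule multiplicity_decompose')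
  have "e < k" unfolding e_def using multiplicity_fact_less[OF assms] .
  then have k: "k = Suc (k - 1 - e + e)" by simp
  have "c \<noteq> 0" using c(2) by (metis dvd_0_right)
  have "(of_nat p ^ k / fact k :: rat) = of_nat p ^ k / (of_nat p ^ e * of_nat c)"
    by (metis c(1) of_nat_fact of_nat_mult of_nat_power)
  also have "\<dots> = of_nat p * (of_int (int p ^ (k - 1 - e)) / of_int (int c))"
    using \<open>c \<noteq> 0\<close> prime_p by (subst (1) k) (simp add: power_add prime_gt_0_nat)
  finally have "(of_nat p ^ k / fact k :: rat) = of_nat p * (of_int (int p ^ (k - 1 - e)) / of_int (int c))" .
  moreover have "p_integral p (of_int (int p ^ (k - 1 - e)) / of_int (int c))"
    unfolding p_integral_def using c(2)
    by (intro exI[of _ "int p ^ (k - 1 - e)"] exI[of _ "int c"]) simp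
  ultimately show ?thesis by (simp only: p_divisible_p_mult_iff)
qed

lemma p_integral_fps_mult: "p_integral_fps p f \<Longrightarrow> p_integral_fps p g \<Longrightarrow> p_integral_fps p (f * g)"
  unfolding p_integral_fps_def fps_mult_nth using prime_p by blast

lemma p_integral_fps_power: "p_integral_fps p f \<Longrightarrow> p_integral_fps p (f ^ k)"
proof (induction k)
  case 0
  show ?case by (simp add: p_integral_fps_def fps_one_nth)
next
  case (Suc k)
  then show ?case by (simp add: p_integral_fps_mult)
qed

lemma p_integral_fps_cutoff: "p_integral_fps p f \<Longrightarrow> p_integral_fps p (fps_cutoff n f)"
  using prime_p by (simp add: p_integral_fps_def)

lemma p_divisible_fps_power_add:
  assumes "p_integral_fps p f" "p_integral_fps p g"
  shows "p_divisible p (((f + g) ^ p) $ m - (f ^ p) $ m - (g ^ p) $ m)"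
proof -
  have p_pos: "p > 0" using prime_p prime_gt_0_nat by blast
  have "{..p} = insert 0 (insert p {1..<p})" using p_pos by auto
  then have "(f + g) ^ p = f ^ p + g ^ p + (\<Sum>k\<in>{1..<p}. of_nat (p choose k) * f ^ k * g ^ (p - k))"
    using p_pos by (simp add: binomial_ring add.commute)
  moreover have "p_divisible p ((\<Sum>k\<in>{1..<p}. of_nat (p choose k) * f ^ k * g ^ (p - k)) $ m)"
    unfolding fps_sum_nth
  proof (intro p_divisible_sum)
    fix k assume "k \<in> {1..<p}"
    then have "p dvd (p choose k)" using prime_p by (intro dvd_choose_prime) auto
    moreover have "p_integral p ((f ^ k * g ^ (p - k)) $ m)"
      using assms by (meson p_integral_fps_def p_integral_fps_mult p_integral_fps_power)
    ultimately have "p_divisible p (of_nat (p choose k) * (f ^ k * g ^ (p - k)) $ m)"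
      by (rule p_divisible_of_nat_mult)
    then show "p_divisible p ((of_nat (p choose k) * f ^ k * g ^ (p - k)) $ m)"
      by (simp add: mult.assoc flip: fps_of_nat)
  qed
  ultimately show ?thesis by simp
qed

lemma p_divisible_fps_cutoff_frobenius:
  assumes "p_integral_fps p f"
  shows "p_divisible p ((fps_cutoff n f ^ p) $ m - (fps_cutoff n f oo fps_X ^ p) $ m)"
proof (induction n arbitrary: m)
  case 0
  show ?case using prime_p by (simp add: zero_power prime_gt_0_nat)
next
  case (Suc n)
  have p_pos: "p > 0" using prime_p prime_gt_0_nat by blast
  define M where "M = fps_const (f $ n) * fps_X ^ n"
  have cutoff_Suc: "fps_cutoff (Suc n) f = fps_cutoff n f + M"
    by (rule fps_ext) (auto simp: M_def less_Suc_eq)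
  have M_integral: "p_integral_fps p M"
    using assms unfolding M_def p_integral_fps_def by auto
  have "M ^ p = fps_const ((f $ n) ^ p) * fps_X ^ (p * n)"
    unfolding M_def by (simp add: power_mult_distrib power_mult mult.commute)
  moreover have "M oo fps_X ^ p = fps_const (f $ n) * fps_X ^ (p * n)"
    unfolding M_def using p_pos
    by (simp add: fps_compose_mult_distrib fps_compose_power[symmetric] power_mult)
  ultimately have M_frob: "p_divisible p ((M ^ p) $ m - (M oo fps_X ^ p) $ m)"
    using p_divisible_power_p_diff assms by (auto simp: p_integral_fps_def)
  have "(fps_cutoff (Suc n) f ^ p) $ m - (fps_cutoff (Suc n) f oo fps_X ^ p) $ m
      = (((fps_cutoff n f + M) ^ p) $ m - (fps_cutoff n f ^ p) $ m - (M ^ p) $ m)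
        + ((fps_cutoff n f ^ p) $ m - (fps_cutoff n f oo fps_X ^ p) $ m)
        + ((M ^ p) $ m - (M oo fps_X ^ p) $ m)"
    unfolding cutoff_Suc by (simp add: fps_compose_add_distrib)
  then show ?case
    using p_divisible_fps_power_add[OF p_integral_fps_cutoff[OF assms] M_integral] Suc.IH M_frob
    by (simp only:) (intro p_divisible_add)
qed

text \<open>In the identity \<open>fps_power_nth_eq_convolution\<close> for \<open>p f\<^sub>n\<close>, the sum is
  \<open>p\<close>-divisible by induction and the remaining difference by the Frobenius congruence for the
  \<open>p\<close>-integral truncation of \<open>f\<close>.\<close>
lemma dwork_p_integral:
  fixes f E :: "rat fps"
  assumes f0: "f $ 0 = 1" and f_power: "f ^ p = (f oo fps_X ^ p) * E"
    and E0: "E $ 0 = 1" and E_cong: "\<And>k. k > 0 \<Longrightarrow> p_divisible p (E $ k)"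
  shows "p_integral p (f $ n)"
proof (induction n rule: less_induct)
  case (less n)
  have p_pos: "p > 0" and p_gt_1: "p > 1"
    using prime_gt_0_nat[OF prime_p] prime_gt_1_nat[OF prime_p] by auto
  show ?case
  proof (cases "n = 0")
    case True
    then show ?thesis using f0 by simp
  next
    case False
    define F where "F = fps_cutoff n f"
    have compose_integral: "p_integral p ((f oo fps_X ^ p) $ i)" if "i < n" for i
    proof -
      have "i div p < n" using that div_le_dividend[of i p] by linarith
      then show ?thesis using less.IH p_pos by (simp add: fps_compose_X_power_nth)
    qed
    have "p_divisible p (\<Sum>i<n. (f oo fps_X ^ p) $ i * E $ (n - i))"
    proof (rule p_divisible_sum)
      fix i assume "i \<in> {..<n}"
      then have "p_divisible p (E $ (n - i) * (f oo fps_X ^ p) $ i)"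
        by (intro p_divisible_mult E_cong compose_integral) auto
      then show "p_divisible p ((f oo fps_X ^ p) $ i * E $ (n - i))"
        by (simp only: mult.commute)
    qed
    moreover have "p_divisible p ((F ^ p) $ n - (F oo fps_X ^ p) $ n)"
    proof -
      have "p_integral_fps p F"
        unfolding p_integral_fps_def F_def using less by auto
      moreover have "fps_cutoff n F = F" unfolding F_def by (rule fps_ext) simp
      ultimately show ?thesis using p_divisible_fps_cutoff_frobenius[of F n n] by simp
    qed
    ultimately have "p_divisible p (of_nat p * f $ n)"
      using fps_power_nth_eq_convolution[OF f0 f_power E0 p_gt_1] False
      unfolding F_def by (simp add: p_divisible_diff)
    then show ?thesis using p_divisible_p_mult_iff by blast
  qed
qed

subsection \<open>The Artin--Hasse series\<close>

lemma AH_log_nth_0: "AH_log p $ 0 = 0"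
  using prime_p by (auto simp: AH_log_def prime_gt_0_nat)

lemma AH_log_functional_eq:
  "fps_const (of_nat p) * AH_log p = (AH_log p oo fps_X ^ p) + fps_const (of_nat p) * fps_X"
proof (rule fps_ext)
  fix m
  have p_pos: "p > 0" and p_gt_1: "p > 1"
    using prime_gt_0_nat[OF prime_p] prime_gt_1_nat[OF prime_p] by auto
  have L: "AH_log p $ m = (if \<exists>i. m = p ^ i then 1 / of_nat m else 0)" for m
    by (simp add: AH_log_def)
  have power_div: "(\<exists>i. m div p = p ^ i) \<longleftrightarrow> (\<exists>i. m = p ^ i)" if "p dvd m" "m \<noteq> 1"
  proof
    assume "\<exists>i. m div p = p ^ i"
    then show "\<exists>i. m = p ^ i" using that(1) by (metis dvd_mult_div_cancel power_Suc)
  next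
    assume "\<exists>i. m = p ^ i"
    then obtain i where "m = p ^ i" by blast
    with that(2) obtain j where "m = p * p ^ j" by (cases i) auto
    then show "\<exists>i. m div p = p ^ i" using p_pos by auto
  qed
  have not_power: "\<not> (\<exists>i. m = p ^ i)" if "\<not> p dvd m" "m \<noteq> 1"
    using that by (metis dvd_power neq0_conv power_0)
  show "(fps_const (of_nat p) * AH_log p) $ m = ((AH_log p oo fps_X ^ p) + fps_const (of_nat p) * fps_X) $ m"
  proof (cases "m = 1")
    case True
    then show ?thesis using p_gt_1 by (auto simp: L fps_compose_X_power_nth intro: exI[of _ 0])
  next
    case False
    then show ?thesis using p_pos
      by (cases "p dvd m") (auto simp: L fps_compose_X_power_nth power_div not_power fps_X_nth)
  qed
qed

text \<open>Both sides solve \<open>y' = p L'(X) y\<close>, \<open>y(0) = 1\<close>, with \<open>L = AH_log p\<close>.\<close>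
lemma AH_power_p: "AH p ^ p = (AH p oo fps_X ^ p) * fps_exp (of_nat p)"
proof -
  define f L c where "f = AH p" and "L = AH_log p" and "c = fps_const (of_nat p :: rat)"
  define Y :: "rat fps" where "Y = fps_X ^ p"
  have p_pos: "p > 0" using prime_p prime_gt_0_nat by blast
  have L0: "L $ 0 = 0" using AH_log_nth_0 by (simp add: L_def)
  have Y0: "Y $ 0 = 0" using p_pos by (simp add: Y_def)
  have f0: "f $ 0 = 1" by (simp add: f_def AH_def AH_log_nth_0)
  have deriv_f: "fps_deriv f = f * fps_deriv L"
    unfolding f_def AH_def L_def[symmetric] using fps_compose_deriv[OF L0, of "fps_exp 1"] by simp
  have deriv_L: "c * fps_deriv L = (fps_deriv L oo Y) * fps_deriv Y + c"
  proof -
    have "fps_deriv (c * L) = fps_deriv ((L oo Y) + c * fps_X)"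
      using AH_log_functional_eq unfolding c_def L_def Y_def by simp
    then show ?thesis using fps_compose_deriv[OF Y0, of L] by (simp add: c_def)
  qed
  have "fps_deriv (f ^ p) = c * fps_deriv f * f ^ (p - 1)"
    by (simp add: fps_deriv_power c_def)
  also have "\<dots> = (c * fps_deriv L) * (f * f ^ (p - 1))"
    by (simp add: deriv_f algebra_simps)
  also have "f * f ^ (p - 1) = f ^ p" using p_pos by (simp add: power_eq_if)
  finally have lhs: "fps_deriv (f ^ p) = (c * fps_deriv L) * f ^ p" .
  have "fps_deriv ((f oo Y) * fps_exp (of_nat p))
      = ((fps_deriv f oo Y) * fps_deriv Y) * fps_exp (of_nat p) + (f oo Y) * (c * fps_exp (of_nat p))"
    by (simp add: fps_compose_deriv[OF Y0] c_def add.commute)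
  also have "fps_deriv f oo Y = (f oo Y) * (fps_deriv L oo Y)"
    unfolding deriv_f by (rule fps_compose_mult_distrib[OF Y0])
  finally have rhs: "fps_deriv ((f oo Y) * fps_exp (of_nat p)) = (c * fps_deriv L) * ((f oo Y) * fps_exp (of_nat p))"
    by (simp add: deriv_L algebra_simps)
  have "f ^ p = (f oo Y) * fps_exp (of_nat p)"
    using f0 by (intro fps_linear_ode_unique[OF lhs rhs]) (simp add: fps_power_zeroth)
  then show ?thesis by (simp add: f_def Y_def)
qed

lemma AH_p_integral: "p_integral p (AH p $ k)"
proof (rule dwork_p_integral[OF _ AH_power_p])
  show "AH p $ 0 = 1" by (simp add: AH_def AH_log_nth_0)
  show "fps_exp (of_nat p) $ 0 = (1::rat)" by simp
  show "p_divisible p (fps_exp (of_nat p) $ k)" if "k > 0" for k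
    using p_divisible_p_power_div_fact[OF that] by simp
qed

end

section \<open>Valuations\<close>

context
  fixes p :: nat and ord :: "'k::field_char_0 \<Rightarrow> ereal"
  assumes prime_p: "prime p" and ord: "is_ord_p p ord"
begin

lemma ord_mult: "ord (x * y) = ord x + ord y"
  and ord_add: "min (ord x) (ord y) \<le> ord (x + y)"
  and ord_eq_infinity_iff: "ord x = \<infinity> \<longleftrightarrow> x = 0"
  and ord_neq_minus_infinity: "ord x \<noteq> - \<infinity>"
  and ord_p: "ord (of_nat p) = 1"
  using ord by (simp_all add: is_ord_p_def)

lemma ord_0: "ord 0 = \<infinity>"
  by (simp add: ord_eq_infinity_iff)

lemma ord_1: "ord 1 = 0"
proof -
  have "ord 1 = ord 1 + ord 1" using ord_mult[of 1 1] by simp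
  then show ?thesis
    using ord_eq_infinity_iff[of 1] ord_neq_minus_infinity[of 1] by (cases "ord 1") auto
qed

lemma ord_uminus: "ord (- x) = ord x"
proof -
  have "ord (-1) + ord (-1) = 0" using ord_mult[of "-1" "-1"] ord_1 by simp
  then have "ord (-1) = 0" using ord_neq_minus_infinity[of "-1"] by (cases "ord (-1)") auto
  then show ?thesis using ord_mult[of "-1" x] by simp
qed

lemma ord_of_nat_nonneg: "0 \<le> ord (of_nat m)"
proof (induction m)
  case 0
  then show ?case by (simp add: ord_0)
next
  case (Suc m)
  then show ?case using ord_add[of "of_nat m" 1] ord_1 by (simp add: add.commute)
qed

lemma ord_of_int_nonneg: "0 \<le> ord (of_int z)"
  using ord_of_nat_nonneg[of "nat \<bar>z\<bar>"] ord_uminus[of "of_nat (nat \<bar>z\<bar>)"]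
  by (cases "z \<ge> 0") simp_all

lemma ord_of_int_eq_0:
  assumes "\<not> int p dvd b"
  shows "ord (of_int b) = 0"
proof (rule ccontr)
  assume "ord (of_int b) \<noteq> 0"
  then have b_pos: "ord (of_int b :: 'k) > 0" using ord_of_int_nonneg[of b] by simp
  have "coprime (int p) b" using assms prime_p by (intro prime_imp_coprime) auto
  then obtain s t where "s * b + t * int p = 1"
    using bezout_int[of b "int p"] by (auto simp: coprime_iff_gcd_eq_1 gcd.commute)
  then have one: "of_int s * of_int b + of_int t * of_nat p = (1::'k)"
    by (metis of_int_1 of_int_add of_int_mult of_int_of_nat_eq)
  have "min (ord (of_int s * of_int b)) (ord (of_int t * of_nat p)) \<le> ord (1::'k)"
    using ord_add[of "of_int s * of_int b" "of_int t * of_nat p"] unfolding one .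
  then have "min (ord (of_int s :: 'k) + ord (of_int b :: 'k)) (ord (of_int t :: 'k) + 1) \<le> 0"
    by (simp only: ord_mult ord_p ord_1)
  moreover have "ord (of_int s :: 'k) + ord (of_int b :: 'k) > 0"
    using ord_of_int_nonneg[of s] b_pos ord_neq_minus_infinity[of "of_int s"]
    by (cases "ord (of_int s :: 'k)"; cases "ord (of_int b :: 'k)") auto
  moreover have "ord (of_int t :: 'k) + 1 > 0"
    using ord_of_int_nonneg[of t] by (cases "ord (of_int t :: 'k)") auto
  ultimately show False by (simp add: min_def split: if_splits)
qed

lemma ord_of_rat_nonneg:
  assumes "p_integral p x"
  shows "0 \<le> ord (of_rat x)"
proof -
  obtain a b where ab: "\<not> int p dvd b" "x = of_int a / of_int b"
    using assms unfolding p_integral_def by blast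
  then have "(of_int a :: 'k) = of_rat x * of_int b"
    by (auto simp: of_rat_divide)
  then have "ord (of_int a :: 'k) = ord (of_rat x)"
    using ord_mult ord_of_int_eq_0[OF ab(1)] by simp
  then show ?thesis using ord_of_int_nonneg[of a] by simp
qed

lemma ord_sum_ge: "(\<And>i. i \<in> S \<Longrightarrow> ereal r \<le> ord (f i)) \<Longrightarrow> ereal r \<le> ord (sum f S)"
proof (induction S rule: infinite_finite_induct)
  case (insert i S)
  then have "ereal r \<le> min (ord (f i)) (ord (sum f S))" by simp
  also have "\<dots> \<le> ord (f i + sum f S)" by (rule ord_add)
  finally show ?case using insert.hyps by simp
qed (simp_all add: ord_0)

lemma ord_prod_ge:
  "(\<And>i. i \<in> S \<Longrightarrow> ereal (r i) \<le> ord (f i)) \<Longrightarrow> ereal (sum r S) \<le> ord (prod f S)"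
proof (induction S rule: infinite_finite_induct)
  case (insert i S)
  then show ?case by (simp add: ord_mult add_mono flip: plus_ereal.simps)
qed (simp_all add: ord_1)

lemma ord_power: "ord x = ereal r \<Longrightarrow> ord (x ^ k) = ereal (real k * r)"
  by (induction k) (simp_all add: ord_1 ord_mult algebra_simps)

lemma ord_power_nonneg_if_power_eq:
  assumes "x ^ q = x" "q \<ge> 2"
  shows "0 \<le> ord (x ^ m)"
proof (cases "x = 0")
  case True
  then show ?thesis by (cases m) (simp_all add: ord_0 ord_1)
next
  case False
  then obtain r where r: "ord x = ereal r"
    using ord_eq_infinity_iff[of x] ord_neq_minus_infinity[of x] by (cases "ord x") auto
  then have "real q * r = r" using ord_power[OF r, of q] assms(1) by simp
  then have "(real q - 1) * r = 0" by (simp add: algebra_simps)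
  moreover have "real q - 1 \<noteq> 0" using assms(2) by simp
  ultimately have "r = 0" by simp
  then show ?thesis using ord_power[OF r, of m] by simp
qed

lemma ord_theta0_monomial_ge:
  assumes "ord g = ereal (1 / (real p - 1))" and "a \<ge> 1" and "\<forall>j<N. lam j ^ (p ^ a) = lam j"
    and "r \<le> real (\<Sum>i<a. \<Sum>j<N. k (i, j)) / (real p - 1)"
  shows "ereal r \<le> ord (\<Prod>i<a. \<Prod>j<N. of_rat (AH p $ k (i, j)) * g ^ k (i, j) * lam j ^ (k (i, j) * p ^ i))"
proof -
  have "p ^ a \<ge> 2"
    using prime_ge_2_nat[OF prime_p] assms(2) by (metis le_trans power_increasing power_one_right prime_ge_1_nat prime_p)
  have factor_ge: "ereal (real (k (i, j)) / (real p - 1))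
      \<le> ord (of_rat (AH p $ k (i, j)) * g ^ k (i, j) * lam j ^ (k (i, j) * p ^ i))" if "j < N" for i j
  proof -
    have "0 \<le> ord (of_rat (AH p $ k (i, j)) :: 'k)"
      by (rule ord_of_rat_nonneg[OF AH_p_integral[OF prime_p]])
    moreover have "0 \<le> ord (lam j ^ (k (i, j) * p ^ i))"
      using assms(3) that \<open>p ^ a \<ge> 2\<close> by (intro ord_power_nonneg_if_power_eq) auto
    ultimately show ?thesis
      using ord_power[OF assms(1), of "k (i, j)"] by (simp add: ord_mult add_increasing add_increasing2)
  qed
  have "ereal (\<Sum>i<a. \<Sum>j<N. real (k (i, j)) / (real p - 1))
      \<le> ord (\<Prod>i<a. \<Prod>j<N. of_rat (AH p $ k (i, j)) * g ^ k (i, j) * lam j ^ (k (i, j) * p ^ i))"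
    using factor_ge by (intro ord_prod_ge) auto
  moreover have "ereal r \<le> ereal (\<Sum>i<a. \<Sum>j<N. real (k (i, j)) / (real p - 1))"
    using assms(4) by (simp add: sum_divide_distrib)
  ultimately show ?thesis by (rule order_trans[rotated])
qed

end

section \<open>The exponent bound\<close>

lemma mu_plus_1_le:
  assumes "d > 0" and "int (card I) \<le> int d * D"
  shows "mu d I + 1 \<le> D"
proof -
  have "real (card I) \<le> real_of_int D * real d"
    using assms(2) by (metis mult.commute of_int_le_iff of_int_mult of_int_of_nat_eq)
  then have "real (card I) / real d \<le> real_of_int D"
    using assms(1) by (simp add: pos_divide_le_eq)
  then show ?thesis by (simp add: mu_def ceiling_le_iff)
qed

definition tail :: "nat \<Rightarrow> int \<Rightarrow> (nat \<Rightarrow> int) \<Rightarrow> nat \<Rightarrow> int" where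
  "tail a P K m = (\<Sum>t<a - m. K (m + t) * P ^ t)"

lemma tail_0: "tail a P K 0 = (\<Sum>i<a. K i * P ^ i)"
  by (simp add: tail_def)

lemma tail_top: "tail a P K a = 0"
  by (simp add: tail_def)

lemma tail_Suc: "m < a \<Longrightarrow> tail a P K m = K m + P * tail a P K (Suc m)"
proof -
  assume "m < a"
  then have "a - m = Suc (a - Suc m)" by simp
  then show ?thesis
    unfolding tail_def by (simp only: sum.lessThan_Suc_shift) (simp add: sum_distrib_left ac_simps)
qed

lemma tail_sum: "tail a P (\<lambda>i. \<Sum>l\<in>L. c i l) m = (\<Sum>l\<in>L. tail a P (\<lambda>i. c i l) m)"
  unfolding tail_def by (simp add: sum_distrib_right sum.swap[of _ L])

lemma tail_mult: "tail a P (\<lambda>i. d * K i) m = d * tail a P K m"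
  unfolding tail_def by (simp add: sum_distrib_left algebra_simps)

lemma power_mult_tail_le:
  assumes "P > 0" "\<And>i. K i \<ge> 0" "m \<le> a"
  shows "P ^ m * tail a P K m \<le> (\<Sum>i<a. K i * P ^ i)"
proof -
  have "P ^ m * tail a P K m = (\<Sum>t<a - m. K (t + m) * P ^ (t + m))"
    unfolding tail_def by (simp add: sum_distrib_left power_add algebra_simps)
  also have "\<dots> = (\<Sum>i\<in>{m..<a}. K i * P ^ i)"
    using sum.shift_bounds_nat_ivl[of "\<lambda>i. K i * P ^ i" 0 m "a - m"] assms(3)
    by (simp add: lessThan_atLeast0)
  also have "\<dots> \<le> (\<Sum>i<a. K i * P ^ i)"
    using assms(1,2) by (intro sum_mono2) auto
  finally show ?thesis .
qed

text \<open>A coordinate \<open>l\<close> with \<open>v\<^sub>l > 0\<close> forces the truncated digit expansion to fall strictly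
  below \<open>P\<^sup>a\<^sup>-\<^sup>m u\<^sub>l\<close>, which produces one unit of defect per element of \<open>I\<close>.\<close>
lemma card_le_sum_tail_defects:
  fixes c :: "nat \<Rightarrow> nat \<Rightarrow> int" and u v :: "nat \<Rightarrow> int"
  assumes "P > 0" and c_nonneg: "\<And>i l. c i l \<ge> 0"
    and coord: "\<And>l. l \<le> n \<Longrightarrow> (\<Sum>i<a. c i l * P ^ i) = P ^ a * u l - v l"
    and v_nonneg: "\<And>l. v l \<ge> 0" and v_pos: "\<And>l. l \<in> I \<Longrightarrow> v l > 0"
    and "I \<subseteq> {..n}" and "m \<le> a"
  shows "int (card I) \<le> (\<Sum>l\<le>n. P ^ (a - m) * u l - tail a P (\<lambda>i. c i l) m)"
proof -
  have defect_ge: "(if l \<in> I then 1 else 0) \<le> P ^ (a - m) * u l - tail a P (\<lambda>i. c i l) m"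
    if "l \<le> n" for l
  proof -
    define X where "X = P ^ (a - m) * u l - tail a P (\<lambda>i. c i l) m"
    have "v l = P ^ a * u l - (\<Sum>i<a. c i l * P ^ i)" using coord[OF that] by simp
    also have "\<dots> \<le> P ^ a * u l - P ^ m * tail a P (\<lambda>i. c i l) m"
      using power_mult_tail_le[OF assms(1) c_nonneg \<open>m \<le> a\<close>] by simp
    also have "\<dots> = P ^ m * X"
      using \<open>m \<le> a\<close> unfolding X_def by (simp add: algebra_simps flip: power_add)
    finally have "v l \<le> P ^ m * X" .
    moreover have "P ^ m > 0" using assms(1) by simp
    have "0 \<le> X"
    proof (rule ccontr)
      assume "\<not> 0 \<le> X"
      then have "P ^ m * X < 0" using \<open>P ^ m > 0\<close> by (simp add: mult_pos_neg)
      then show False using \<open>v l \<le> P ^ m * X\<close> v_nonneg[of l] by linarith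
    qed
    moreover have "0 < X" if "l \<in> I"
      using \<open>v l \<le> P ^ m * X\<close> v_pos[OF that] \<open>P ^ m > 0\<close> zero_less_mult_pos[of "P ^ m" X] by linarith
    ultimately show ?thesis unfolding X_def[symmetric] by auto
  qed
  have "int (card I) = (\<Sum>l\<le>n. if l \<in> I then 1 else 0)"
    using \<open>I \<subseteq> {..n}\<close> by (simp add: sum.If_cases Int_absorb1)
  also have "\<dots> \<le> (\<Sum>l\<le>n. P ^ (a - m) * u l - tail a P (\<lambda>i. c i l) m)"
    by (intro sum_mono defect_ge) simp
  finally show ?thesis .
qed

lemma sum_eq_telescoping_defects:
  fixes K D :: "nat \<Rightarrow> int"
  assumes "\<And>m. m < a \<Longrightarrow> K m = P * D (Suc m) - D m" and "a \<ge> 1"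
  shows "(\<Sum>m<a. K m) = P * D a - D 0 + (P - 1) * (\<Sum>m<a - 1. D (Suc m))"
proof -
  have "(\<Sum>m<a. K m) = (\<Sum>m<a. (D (Suc m) - D m) + (P - 1) * D (Suc m))"
    using assms(1) by (intro sum.cong) (auto simp: algebra_simps)
  also have "\<dots> = (\<Sum>m<a. D (Suc m) - D m) + (P - 1) * (\<Sum>m<a. D (Suc m))"
    by (simp add: sum.distrib sum_distrib_left)
  also have "(\<Sum>m<a. D (Suc m)) = (\<Sum>m<a - 1. D (Suc m)) + D a"
    using assms(2) by (cases a) simp_all
  finally show ?thesis by (simp add: sum_lessThan_telescope algebra_simps)
qed

text \<open>Summing the coordinate defects over \<open>l \<le> n\<close> gives \<open>d\<close> times the top defect.\<close>
lemma mu_plus_1_le_top_defect: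
  fixes c :: "nat \<Rightarrow> nat \<Rightarrow> int" and K :: "nat \<Rightarrow> int" and u v :: "nat \<Rightarrow> nat"
  assumes "P > 0" and "d > 0" and c_nonneg: "\<And>i l. c i l \<ge> 0"
    and c_sum: "\<And>i. (\<Sum>l\<le>n. c i l) = int d * K i"
    and coord: "\<And>l. l \<le> n \<Longrightarrow> (\<Sum>i<a. c i l * P ^ i) = P ^ a * int (u l) - int (v l)"
    and u: "u \<in> U n d I" and v: "v \<in> U n d I" and "I \<subseteq> {..n}" and "m \<le> a"
  shows "mu d I + 1 \<le> P ^ (a - m) * int (u (n+1)) - tail a P K m"
proof (rule mu_plus_1_le[OF \<open>d > 0\<close>])
  have "(\<Sum>l\<le>n. int (u l)) = int d * int (u (n+1))"
    using u by (simp add: U_def flip: of_nat_sum of_nat_mult)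
  then have "(\<Sum>l\<le>n. P ^ (a - m) * int (u l) - tail a P (\<lambda>i. c i l) m)
      = P ^ (a - m) * (int d * int (u (n+1))) - tail a P (\<lambda>i. int d * K i) m"
    using c_sum by (simp add: sum_subtractf flip: sum_distrib_left tail_sum)
  also have "\<dots> = int d * (P ^ (a - m) * int (u (n+1)) - tail a P K m)"
    unfolding tail_mult by (simp add: algebra_simps)
  finally have "(\<Sum>l\<le>n. P ^ (a - m) * int (u l) - tail a P (\<lambda>i. c i l) m)
      = int d * (P ^ (a - m) * int (u (n+1)) - tail a P K m)" .
  moreover have "int (card I) \<le> (\<Sum>l\<le>n. P ^ (a - m) * int (u l) - tail a P (\<lambda>i. c i l) m)"
    using v \<open>I \<subseteq> {..n}\<close> \<open>m \<le> a\<close>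
    by (intro card_le_sum_tail_defects[OF \<open>P > 0\<close> c_nonneg coord]) (auto simp: U_def)
  ultimately show "int (card I) \<le> int d * (P ^ (a - m) * int (u (n+1)) - tail a P K m)"
    by simp
qed

text \<open>With the defects \<open>D m = P\<^sup>a\<^sup>-\<^sup>m u\<^sub>n\<^sub>+\<^sub>1 - tail\<^sub>m\<close> of the top coordinate, the digit sum
  telescopes to \<open>P u\<^sub>n\<^sub>+\<^sub>1 - v\<^sub>n\<^sub>+\<^sub>1 + (P - 1) \<Sum>\<^sub>0\<^sub><\<^sub>m\<^sub><\<^sub>a D m\<close>.\<close>
lemma sum_digits_ge:
  fixes c :: "nat \<Rightarrow> nat \<Rightarrow> int" and K :: "nat \<Rightarrow> int" and u v :: "nat \<Rightarrow> nat"
  assumes "P \<ge> 1" and "a \<ge> 1" and "d > 0" and c_nonneg: "\<And>i l. c i l \<ge> 0"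
    and c_sum: "\<And>i. (\<Sum>l\<le>n. c i l) = int d * K i"
    and coord: "\<And>l. l \<le> n \<Longrightarrow> (\<Sum>i<a. c i l * P ^ i) = P ^ a * int (u l) - int (v l)"
    and top: "(\<Sum>i<a. K i * P ^ i) = P ^ a * int (u (n+1)) - int (v (n+1))"
    and u: "u \<in> U n d I" and v: "v \<in> U n d I" and "I \<subseteq> {..n}"
  shows "P * int (u (n+1)) - int (v (n+1)) + (P - 1) * (int a - 1) * (mu d I + 1) \<le> (\<Sum>i<a. K i)"
proof -
  define D where "D m = P ^ (a - m) * int (u (n+1)) - tail a P K m" for m
  have "(\<Sum>i<a. K i) = P * D a - D 0 + (P - 1) * (\<Sum>m<a - 1. D (Suc m))"
  proof (rule sum_eq_telescoping_defects[OF _ \<open>a \<ge> 1\<close>])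
    fix m assume "m < a"
    then have "P ^ (a - m) = P * P ^ (a - Suc m)" by (metis Suc_diff_Suc power_Suc)
    then show "K m = P * D (Suc m) - D m"
      using tail_Suc[OF \<open>m < a\<close>, of P K] by (simp add: D_def algebra_simps)
  qed
  moreover have "D a = int (u (n+1))" "D 0 = int (v (n+1))"
    using top by (simp_all add: D_def tail_top tail_0)
  moreover have "(P - 1) * ((int a - 1) * (mu d I + 1)) \<le> (P - 1) * (\<Sum>m<a - 1. D (Suc m))"
  proof (rule mult_left_mono)
    have "mu d I + 1 \<le> D m" if "m \<le> a" for m
      unfolding D_def using assms that
      by (intro mu_plus_1_le_top_defect[OF _ _ c_nonneg c_sum coord]) auto
    then show "(int a - 1) * (mu d I + 1) \<le> (\<Sum>m<a - 1. D (Suc m))"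
      using sum_mono[of "{..<a - 1}" "\<lambda>_. mu d I + 1" "\<lambda>m. D (Suc m)"] \<open>a \<ge> 1\<close>
      by (simp add: of_nat_diff)
    show "0 \<le> P - 1" using \<open>P \<ge> 1\<close> by simp
  qed
  ultimately show ?thesis
    by (simp add: mult.assoc)
qed

lemma sum_exponents_ge:
  fixes k :: "nat \<times> nat \<Rightarrow> nat" and u v :: "nat \<Rightarrow> nat"
  assumes "p \<ge> 1" and "a \<ge> 1" and "d \<ge> 1"
    and A_sum: "\<forall>j<N. (\<Sum>l\<le>n. A j l) = d"
    and "I \<subseteq> {..n}" and "u \<in> U n d I" and "v \<in> U n d I"
    and k: "\<forall>l\<le>n+1. (\<Sum>i<a. \<Sum>j<N. int (k (i, j) * p ^ i * Aplus n A j l)) = int (p ^ a * u l) - int (v l)"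
  shows "int p * int (u (n+1)) - int (v (n+1)) + (int p - 1) * (int a - 1) * (mu d I + 1)
           \<le> int (\<Sum>i<a. \<Sum>j<N. k (i, j))"
proof -
  define K where "K i = (\<Sum>j<N. int (k (i, j)))" for i
  define c where "c i l = (\<Sum>j<N. int (k (i, j) * A j l))" for i l
  have top: "(\<Sum>i<a. K i * int p ^ i) = int p ^ a * int (u (n+1)) - int (v (n+1))"
    using k[rule_format, of "n+1"] by (simp add: Aplus_def K_def sum_distrib_right)
  have coord: "(\<Sum>i<a. c i l * int p ^ i) = int p ^ a * int (u l) - int (v l)" if "l \<le> n" for l
    using k[rule_format, of l] that
    by (simp add: Aplus_def c_def sum_distrib_left sum_distrib_right ac_simps)
  have c_sum: "(\<Sum>l\<le>n. c i l) = int d * K i" for i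
  proof -
    have "(\<Sum>l\<le>n. c i l) = (\<Sum>j<N. int (k (i, j)) * int (\<Sum>l\<le>n. A j l))"
      unfolding c_def by (subst sum.swap) (simp add: sum_distrib_left)
    also have "\<dots> = (\<Sum>j<N. int (k (i, j)) * int d)"
      using A_sum by simp
    finally show ?thesis by (simp add: K_def sum_distrib_left mult.commute)
  qed
  have "int p * int (u (n+1)) - int (v (n+1)) + (int p - 1) * (int a - 1) * (mu d I + 1)
      \<le> (\<Sum>i<a. K i)"
    using assms by (intro sum_digits_ge[OF _ _ _ _ c_sum coord top]) (auto simp: c_def sum_nonneg)
  then show ?thesis by (simp add: K_def)
qed

theorem corollary3p26:
  fixes p a n d N :: nat and A :: "nat \<Rightarrow> nat \<Rightarrow> nat"
    and ord :: "'k::field_char_0 \<Rightarrow> ereal" and \<gamma>0 :: 'k and lam :: "nat \<Rightarrow> 'k"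
    and I :: "nat set" and u v :: "nat \<Rightarrow> nat"
  assumes "prime p" and "a \<ge> 1" and "n \<ge> 1" and "d \<ge> 2" and "N \<ge> 1"
    and "\<forall>j<N. (\<Sum>l\<le>n. A j l) = d"
    and "is_ord_p p ord"
    and "is_gamma0 p ord \<gamma>0"
    and "\<forall>j<N. lam j ^ (p ^ a) = lam j"
    and "I \<subseteq> {0..n}"
    and "u \<in> U n d I" and "v \<in> U n d I"
  shows "ord (theta0_coeff p a n N A \<gamma>0 lam (\<lambda>l. int (p ^ a * u l) - int (v l)))
           \<ge> ereal ((real p * real (u (n+1)) - real (v (n+1))) / (real p - 1)
                    + (real a - 1) * (real_of_int (mu d I) + 1))"
proof -
  have "p \<ge> 2" using \<open>prime p\<close> prime_ge_2_nat by blast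
  have ord_\<gamma>0: "ord \<gamma>0 = ereal (1 / (real p - 1))"
    using \<open>is_gamma0 p ord \<gamma>0\<close> by (simp add: is_gamma0_def)
  define X where "X = real p * real (u (n+1)) - real (v (n+1))"
  define Y where "Y = (real a - 1) * (real_of_int (mu d I) + 1)"
  show ?thesis
    unfolding theta0_coeff_def X_def[symmetric] Y_def[symmetric]
  proof (rule ord_sum_ge[OF \<open>prime p\<close> \<open>is_ord_p p ord\<close>], clarify,
      rule ord_theta0_monomial_ge[OF \<open>prime p\<close> \<open>is_ord_p p ord\<close> ord_\<gamma>0 \<open>a \<ge> 1\<close> assms(9)])
    fix k :: "nat \<times> nat \<Rightarrow> nat"
    assume "\<forall>l\<le>n+1. (\<Sum>i<a. \<Sum>j<N. int (k (i, j) * p ^ i * Aplus n A j l)) = int (p ^ a * u l) - int (v l)"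
    then have "int p * int (u (n+1)) - int (v (n+1)) + (int p - 1) * (int a - 1) * (mu d I + 1)
        \<le> int (\<Sum>i<a. \<Sum>j<N. k (i, j))"
      using assms \<open>p \<ge> 2\<close> by (intro sum_exponents_ge) (auto simp: atLeast0AtMost)
    then have "X + Y * (real p - 1) \<le> real (\<Sum>i<a. \<Sum>j<N. k (i, j))"
      using \<open>a \<ge> 1\<close> unfolding X_def Y_def
      by (simp add: of_nat_diff algebra_simps flip: of_int_le_iff[where 'a=real])
    then show "X / (real p - 1) + Y \<le> real (\<Sum>i<a. \<Sum>j<N. k (i, j)) / (real p - 1)"
      using \<open>p \<ge> 2\<close> by (simp add: pos_le_divide_eq distrib_right)
  qed
qed

end
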